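(* Any amendment strategy is outcome-equivalent to the insertion-sort strategy.
   Context: Let $\mathcal{X}=\{1,\dots,n\}$, labelled so that the chair's preference (a ranking) is $1\succ\cdots\succ n$. A proto-ranking is an irreflexive transitive relation on $\mathcal{X}$; a ranking is a total proto-ranking; a tournament is a total asymmetric relation on $\mathcal{X}$. Interaction: given a tournament $\mathrel{W}$, start from $R_0=\varnothing$; in each period with $R_{t-1}$ not total the chair offers a pair $\{x,y\}$ unranked by $R_{t-1}$, the winner is $x$ if $x\mathrel{W}y$ and $y$ otherwise, and $R_t$ is the transitive closure of $R_{t-1}\cup\{(\text{winner},\text{loser})\}$; stop when $R_t$ is total. A strategy assigns to each non-terminal history (sequence of (winner, loser) pairs) a pair unranked at it; its outcome under $\mathrel{W}$ is the final ranking. Two strategies are outcome-equivalent if they have the same outcome under every tournament. Insertion-sort strategy: at a history with current proto-ranking $R$, let $L(z)=\{w: z\succ w,\ \text{neither } zRw\text{ nor } wRz\}$; let $x$ be the $\succ$-worst alternative with $L(x)\ne\varnothing$ and $y$ the $R$-highest element of $L(x)$; offer $\{x,y\}$. Amendment algorithm on a set $\{a_1\succ\cdots\succ a_m\}$: pit $a_{m-1}$ against $a_m$, then $a_{m-2}$ against the winner, then $a_{m-3}$ against the previous winner, etc.; the winner of the last round is the final winner. Recursive-amendment algorithm: run the amendment algorithm on $\mathcal{X}$ to get final winner $y_1$; run it on $\mathcal{X}\setminus\{y_1\}$ to get $y_2$; on $\mathcal{X}\setminus\{y_1,y_2\}$ to get $y_3$; and so on, where whenever the algorithm demands a vote on a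 pair already ranked as $xRy$ no vote is held and it is treated as if $x$ had won. An amendment strategy is any strategy whose behaviour along every history generated by it and some tournament coincides with the recursive-amendment algorithm. *)

theory Defs
  imports Main
begin

text \<open>Alternatives are 1..n (natural numbers); the chair's ranking is
  1 > 2 > ... > n, i.e. x is chair-preferred to y iff x < y.
  Relations are sets of pairs; (x,y) in R means x is ranked above y.
  A history is a list of (winner, loser) pairs.\<close>

definition alts :: "nat \<Rightarrow> nat set" where
  "alts n = {1..n}"

definition proto_ranking :: "nat \<Rightarrow> (nat \<times> nat) set \<Rightarrow> bool" where
  "proto_ranking n R \<longleftrightarrow> R \<subseteq> alts n \<times> alts n \<and> irrefl R \<and> trans R"

definition ranking :: "nat \<Rightarrow> (nat \<times> nat) set \<Rightarrow> bool" where
  "ranking n R \<longleftrightarrow> proto_ranking n R \<and> total_on (alts n) R"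

definition tournament :: "nat \<Rightarrow> (nat \<times> nat) set \<Rightarrow> bool" where
  "tournament n W \<longleftrightarrow> W \<subseteq> alts n \<times> alts n \<and> total_on (alts n) W
      \<and> (\<forall>x y. (x, y) \<in> W \<longrightarrow> (y, x) \<notin> W)"

definition rk :: "(nat \<times> nat) list \<Rightarrow> (nat \<times> nat) set" where
  "rk h = trancl (set h)"

definition terminal :: "nat \<Rightarrow> (nat \<times> nat) list \<Rightarrow> bool" where
  "terminal n h \<longleftrightarrow> total_on (alts n) (rk h)"

definition unranked :: "nat \<Rightarrow> (nat \<times> nat) list \<Rightarrow> nat \<Rightarrow> nat \<Rightarrow> bool" where
  "unranked n h x y \<longleftrightarrow> x \<in> alts n \<and> y \<in> alts n \<and> x \<noteq> y
      \<and> (x, y) \<notin> rk h \<and> (y, x) \<notin> rk h"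

inductive legal :: "nat \<Rightarrow> (nat \<times> nat) list \<Rightarrow> bool" for n where
  legal_Nil: "legal n []"
| legal_snoc: "legal n h \<Longrightarrow> \<not> terminal n h \<Longrightarrow> unranked n h x y \<Longrightarrow> legal n (h @ [(x, y)])"

text \<open>A strategy maps histories to offered pairs (x,y), standing for the pair {x,y}.\<close>
type_synonym strategy = "(nat \<times> nat) list \<Rightarrow> nat \<times> nat"

definition is_strategy :: "nat \<Rightarrow> strategy \<Rightarrow> bool" where
  "is_strategy n \<sigma> \<longleftrightarrow>
     (\<forall>h. legal n h \<and> \<not> terminal n h \<longrightarrow> unranked n h (fst (\<sigma> h)) (snd (\<sigma> h)))"

definition play :: "(nat \<times> nat) set \<Rightarrow> nat \<times> nat \<Rightarrow> nat \<times> nat" where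
  "play W p = (if p \<in> W then p else (snd p, fst p))"

primrec hist :: "nat \<Rightarrow> strategy \<Rightarrow> (nat \<times> nat) set \<Rightarrow> nat \<Rightarrow> (nat \<times> nat) list" where
  "hist n \<sigma> W 0 = []"
| "hist n \<sigma> W (Suc k) =
     (if terminal n (hist n \<sigma> W k) then hist n \<sigma> W k
      else hist n \<sigma> W k @ [play W (\<sigma> (hist n \<sigma> W k))])"

definition outcome :: "nat \<Rightarrow> strategy \<Rightarrow> (nat \<times> nat) set \<Rightarrow> (nat \<times> nat) set" where
  "outcome n \<sigma> W = rk (hist n \<sigma> W (LEAST k. terminal n (hist n \<sigma> W k)))"

definition outcome_equiv :: "nat \<Rightarrow> strategy \<Rightarrow> strategy \<Rightarrow> bool" where
  "outcome_equiv n \<sigma> \<tau> \<longleftrightarrow> (\<forall>W. tournament n W \<longrightarrow> outcome n \<sigma> W = outcome n \<tau> W)"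

definition Lset :: "nat \<Rightarrow> (nat \<times> nat) list \<Rightarrow> nat \<Rightarrow> nat set" where
  "Lset n h z = {w. z < w \<and> unranked n h z w}"

definition insertion_strategy :: "nat \<Rightarrow> strategy" where
  "insertion_strategy n h =
     (let x = Max {z \<in> alts n. Lset n h z \<noteq> {}};
          y = (THE y. y \<in> Lset n h x \<and> (\<forall>w \<in> Lset n h x. w \<noteq> y \<longrightarrow> (y, w) \<in> rk h))
      in (x, y))"

text \<open>State: (history of votes held, current winner).\<close>
definition duel :: "(nat \<times> nat) set \<Rightarrow> (nat \<times> nat) list \<times> nat \<Rightarrow> nat \<Rightarrow> (nat \<times> nat) list \<times> nat" where
  "duel W st a =
     (let h = fst st; c = snd st in
      if (a, c) \<in> rk h then (h, a)
      else if (c, a) \<in> rk h then (h, c)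
      else let v = play W (a, c) in (h @ [v], fst v))"

text \<open>Amendment algorithm on the list S = [a1,...,am] (in chair order a1 > ... > am):
  a(m-1) vs am, then a(m-2) vs the winner, etc.\<close>
definition amendment :: "(nat \<times> nat) set \<Rightarrow> (nat \<times> nat) list \<Rightarrow> nat list \<Rightarrow> (nat \<times> nat) list \<times> nat" where
  "amendment W h S = foldl (duel W) (h, last S) (rev (butlast S))"

text \<open>Recursive amendment; the first argument bounds the number of rounds (each round
  removes the final winner from S, so |S| rounds suffice).\<close>
primrec ramend :: "nat \<Rightarrow> (nat \<times> nat) set \<Rightarrow> (nat \<times> nat) list \<Rightarrow> nat list \<Rightarrow> (nat \<times> nat) list" where
  "ramend 0 W h S = h"
| "ramend (Suc k) W h S =
     (if S = [] then h
      else let r = amendment W h S in ramend k W (fst r) (remove1 (snd r) S))"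

definition amend_votes :: "nat \<Rightarrow> (nat \<times> nat) set \<Rightarrow> (nat \<times> nat) list" where
  "amend_votes n W = ramend n W [] [1..<Suc n]"

definition amendment_strategy :: "nat \<Rightarrow> strategy \<Rightarrow> bool" where
  "amendment_strategy n \<sigma> \<longleftrightarrow>
     (\<forall>W. tournament n W \<longrightarrow> (\<forall>k. \<not> terminal n (hist n \<sigma> W k) \<longrightarrow>
        k < length (amend_votes n W) \<and>
        amend_votes n W ! k = play W (\<sigma> (hist n \<sigma> W k))))"

end

theory Submission
  imports Defs
begin

(* Inserting the alternatives into a ranking from the chair-worst upwards,
   each one directly above the highest-ranked alternative it beats, yields a strict linear order I
   with two local properties: a pair ranked against the chair's order was won by the chair-worse
   alternative, and a pair ranked with the chair's order, with no chair-worse alternative in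
   between, was won by the chair-better one. Every vote held by the amendment algorithm and by
   insertion sort is on such a pair, so every vote agrees with I. Both interactions stop with a
   total ranking contained in I, which must then be I itself. *)

definition inverted_pairs_won :: "'a::linorder rel \<Rightarrow> 'a set \<Rightarrow> 'a rel \<Rightarrow> bool" where
  "inverted_pairs_won W A I \<longleftrightarrow> (\<forall>k\<in>A. \<forall>t\<in>A. k < t \<longrightarrow> (t, k) \<in> I \<longrightarrow> (t, k) \<in> W)"

definition adjacent_pairs_won :: "'a::linorder rel \<Rightarrow> 'a set \<Rightarrow> 'a rel \<Rightarrow> bool" where
  "adjacent_pairs_won W A I \<longleftrightarrow> (\<forall>k\<in>A. \<forall>t\<in>A. k < t \<longrightarrow> (k, t) \<in> I \<longrightarrow>
      (\<forall>v\<in>A. k < v \<longrightarrow> (k, v) \<in> I \<longrightarrow> (v, t) \<notin> I) \<longrightarrow> (k, t) \<in> W)"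

definition insertion_ranking :: "'a::linorder rel \<Rightarrow> 'a set \<Rightarrow> 'a rel \<Rightarrow> bool" where
  "insertion_ranking W A I \<longleftrightarrow> I \<subseteq> A \<times> A \<and> strict_linear_order_on A I
      \<and> inverted_pairs_won W A I \<and> adjacent_pairs_won W A I"

lemma strict_linear_order_on_insert_cut:
  assumes order: "strict_linear_order_on A I" and field: "I \<subseteq> A \<times> A" and x: "x \<notin> A"
    and U: "U \<subseteq> A" and up: "\<And>u v. u \<in> U \<Longrightarrow> (v, u) \<in> I \<Longrightarrow> v \<in> U"
  shows "strict_linear_order_on (insert x A) (I \<union> U \<times> {x} \<union> {x} \<times> (A - U))"
    (is "strict_linear_order_on _ ?J")
proof -
  have trans: "trans I" and irrefl: "irrefl I" and total: "total_on A I"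
    using order by (simp_all add: strict_linear_order_on_def)
  have "trans ?J"
  proof (rule transI)
    fix a b c
    assume ab: "(a, b) \<in> ?J" and bc: "(b, c) \<in> ?J"
    have "(a, c) \<in> I" if "a \<in> U" "c \<in> A - U"
    proof -
      have "(a, c) \<in> I \<or> (c, a) \<in> I"
        using that total U by (auto simp: total_on_def)
      then show ?thesis
        using that up by blast
    qed
    then show "(a, c) \<in> ?J"
      using ab bc x field U up trans[THEN transD] by blast
  qed
  moreover have "irrefl ?J"
    using irrefl x U by (auto simp: irrefl_def)
  moreover have "total_on (insert x A) ?J"
    using total by (auto simp: total_on_def)
  ultimately show ?thesis
    by (simp add: strict_linear_order_on_def)
qed

lemma insertion_ranking_insert_least:
  assumes ranking: "insertion_ranking W A I" and W: "total_on (insert x A) W"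
    and least: "\<forall>a\<in>A. x < a"
  \<comment> \<open>\<open>x\<close> goes directly above the highest-ranked alternative it beats, or to the bottom.\<close>
  defines "U \<equiv> {u \<in> A. \<forall>b\<in>A. (x, b) \<in> W \<longrightarrow> (u, b) \<in> I}"
  shows "insertion_ranking W (insert x A) (I \<union> U \<times> {x} \<union> {x} \<times> (A - U))"
    (is "insertion_ranking _ _ ?J")
proof -
  have field: "I \<subseteq> A \<times> A" and order: "strict_linear_order_on A I"
    and inverted: "inverted_pairs_won W A I" and adjacent: "adjacent_pairs_won W A I"
    using ranking by (simp_all add: insertion_ranking_def)
  then have trans: "trans I" and irrefl: "\<And>a. (a, a) \<notin> I" and total: "total_on A I"
    by (simp_all add: strict_linear_order_on_def irrefl_def)
  have x: "x \<notin> A"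
    using least by blast
  have U: "U \<subseteq> A"
    by (auto simp: U_def)
  have up: "v \<in> U" if "u \<in> U" "(v, u) \<in> I" for u v
    using that field trans[THEN transD] by (auto simp: U_def)
  have "strict_linear_order_on (insert x A) ?J"
    using strict_linear_order_on_insert_cut[OF order field x U up] .
  moreover have "?J \<subseteq> insert x A \<times> insert x A"
    using field U by blast
  moreover have "inverted_pairs_won W (insert x A) ?J"
    unfolding inverted_pairs_won_def
  proof (intro ballI impI)
    fix k t
    assume k: "k \<in> insert x A" and t: "t \<in> insert x A" and "k < t" and tk: "(t, k) \<in> ?J"
    show "(t, k) \<in> W"
    proof (cases "k = x")
      case True
      then have "t \<in> U"
        using tk field x by auto
      then have "(x, t) \<notin> W"
        using irrefl by (auto simp: U_def)
      then show ?thesis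
        using W \<open>t \<in> U\<close> U x True by (auto simp: total_on_def)
    next
      case False
      then have "k \<in> A" "t \<in> A" "(t, k) \<in> I"
        using k t tk least \<open>k < t\<close> by auto
      then show ?thesis
        using inverted \<open>k < t\<close> by (simp add: inverted_pairs_won_def)
    qed
  qed
  moreover have "adjacent_pairs_won W (insert x A) ?J"
    unfolding adjacent_pairs_won_def
  proof (intro ballI impI)
    fix k t
    assume k: "k \<in> insert x A" and t: "t \<in> insert x A" and "k < t" and kt: "(k, t) \<in> ?J"
      and between: "\<forall>v\<in>insert x A. k < v \<longrightarrow> (k, v) \<in> ?J \<longrightarrow> (v, t) \<notin> ?J"
    show "(k, t) \<in> W"
    proof (cases "k = x")
      case True
      then have "t \<in> A - U"
        using kt field x irrefl U \<open>k < t\<close> by auto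
      then obtain b where b: "b \<in> A" "(x, b) \<in> W" "(t, b) \<notin> I"
        by (auto simp: U_def)
      show ?thesis
      proof (rule ccontr)
        assume "(k, t) \<notin> W"
        then have "b \<noteq> t"
          using b True by blast
        then have "(b, t) \<in> I"
          using total b \<open>t \<in> A - U\<close> by (auto simp: total_on_def)
        moreover have "b \<notin> U"
          using b irrefl by (auto simp: U_def)
        ultimately show False
          using between b least True by blast
      qed
    next
      case False
      then have "k \<in> A" "t \<in> A" "(k, t) \<in> I"
        using k t kt least \<open>k < t\<close> by auto
      moreover have "\<forall>v\<in>A. k < v \<longrightarrow> (k, v) \<in> I \<longrightarrow> (v, t) \<notin> I"
        using between by blast
      ultimately show ?thesis
        using adjacent \<open>k < t\<close> by (simp add: adjacent_pairs_won_def)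
    qed
  qed
  ultimately show ?thesis
    by (simp add: insertion_ranking_def)
qed

lemma insertion_ranking_exists:
  assumes "finite A" "total_on A W"
  shows "\<exists>I. insertion_ranking W A I"
  using assms
proof (induction A rule: finite_linorder_min_induct)
  case empty
  show ?case
    by (auto simp: insertion_ranking_def strict_linear_order_on_def inverted_pairs_won_def
        adjacent_pairs_won_def)
next
  case (insert x A)
  then obtain I where "insertion_ranking W A I"
    using total_on_subset by (metis subset_insertI)
  then show ?case
    using insertion_ranking_insert_least insert by blast
qed

lemma adjacent_pairs_won_subset:
  assumes "adjacent_pairs_won W A I" "B \<subseteq> A"
    and "\<And>k v. k \<in> B \<Longrightarrow> v \<in> A \<Longrightarrow> k < v \<Longrightarrow> (k, v) \<in> I \<Longrightarrow> v \<in> B"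
  shows "adjacent_pairs_won W B I"
  using assms unfolding adjacent_pairs_won_def by blast

lemma ranking_if_insertion_ranking: "insertion_ranking W (alts n) I \<Longrightarrow> ranking n I"
  by (simp add: insertion_ranking_def ranking_def proto_ranking_def strict_linear_order_on_def)

lemma rk_subset: "trans I \<Longrightarrow> set h \<subseteq> I \<Longrightarrow> rk h \<subseteq> I"
  unfolding rk_def by (metis trancl_id trancl_mono_subset)

lemma set_subset_rk: "set h \<subseteq> rk h"
  unfolding rk_def by auto

lemma play_notin_rk: "unranked n h x y \<Longrightarrow> play W (x, y) \<notin> rk h"
  by (simp add: unranked_def play_def)

lemma subrelation_eq_if_total:
  assumes "R \<subseteq> I" "total_on A R" "I \<subseteq> A \<times> A" "irrefl I" "trans I"
  shows "R = I"
proof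
  show "I \<subseteq> R"
  proof
    fix p
    assume "p \<in> I"
    moreover obtain a b where p: "p = (a, b)"
      by (cases p)
    ultimately have "a \<in> A" "b \<in> A" "a \<noteq> b"
      using assms(3,4) by (auto simp: irrefl_def)
    then have "(a, b) \<in> R \<or> (b, a) \<in> R"
      using assms(2) by (auto simp: total_on_def)
    then show "p \<in> R"
      using \<open>p \<in> I\<close> p assms(1,4,5) by (auto simp: irrefl_def dest: transD)
  qed
qed (fact assms(1))

lemma outcome_eq_ranking:
  assumes "ranking n I" and "\<exists>k. terminal n (hist n \<sigma> W k)" and "\<And>k. set (hist n \<sigma> W k) \<subseteq> I"
  shows "outcome n \<sigma> W = I"
proof -
  define m where "m = (LEAST k. terminal n (hist n \<sigma> W k))"
  have "terminal n (hist n \<sigma> W m)"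
    unfolding m_def using assms(2) by (rule LeastI_ex)
  moreover have "rk (hist n \<sigma> W m) \<subseteq> I"
    using assms(1,3) rk_subset by (simp add: ranking_def proto_ranking_def)
  ultimately have "rk (hist n \<sigma> W m) = I"
    using assms(1) subrelation_eq_if_total
    by (auto simp: ranking_def proto_ranking_def terminal_def)
  then show ?thesis
    by (simp add: outcome_def m_def)
qed

lemma hist_terminates:
  assumes offers_unranked: "\<And>k. \<not> terminal n (hist n \<sigma> W k) \<Longrightarrow>
      unranked n (hist n \<sigma> W k) (fst (\<sigma> (hist n \<sigma> W k))) (snd (\<sigma> (hist n \<sigma> W k)))"
    and "finite F" "\<And>k. set (hist n \<sigma> W k) \<subseteq> F"
  shows "\<exists>k. terminal n (hist n \<sigma> W k)"
proof (rule ccontr)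
  assume never: "\<not> ?thesis"
  have "card (set (hist n \<sigma> W k)) = k" for k
  proof (induction k)
    case 0
    show ?case
      by simp
  next
    case (Suc k)
    let ?h = "hist n \<sigma> W k"
    have "unranked n ?h (fst (\<sigma> ?h)) (snd (\<sigma> ?h))"
      using offers_unranked never by blast
    then have "play W (\<sigma> ?h) \<notin> rk ?h"
      using play_notin_rk by fastforce
    then have "play W (\<sigma> ?h) \<notin> set ?h"
      using set_subset_rk by blast
    then show ?case
      using Suc never by simp
  qed
  then have "card (set (hist n \<sigma> W (Suc (card F)))) = Suc (card F)" .
  moreover have "card (set (hist n \<sigma> W (Suc (card F)))) \<le> card F"
    using card_mono assms(2,3) .
  ultimately show False
    by linarith
qed

definition greatest_in :: "'a rel \<Rightarrow> 'a set \<Rightarrow> 'a \<Rightarrow> bool" where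
  "greatest_in I B y \<longleftrightarrow> y \<in> B \<and> (\<forall>w\<in>B. w \<noteq> y \<longrightarrow> (y, w) \<in> I)"

lemma greatest_in_unique:
  assumes "greatest_in R B y" "greatest_in R B y'" "trans R" "irrefl R"
  shows "y' = y"
proof (rule ccontr)
  assume "y' \<noteq> y"
  then have "(y, y') \<in> R" "(y', y) \<in> R"
    using assms(1,2) by (auto simp: greatest_in_def)
  then have "(y, y) \<in> R"
    using assms(3) by (blast dest: transD)
  then show False
    using assms(4) by (simp add: irrefl_def)
qed

lemma exists_Lset_nonempty:
  assumes "\<not> terminal n h"
  shows "\<exists>z\<in>alts n. Lset n h z \<noteq> {}"
proof -
  obtain u w where "u \<in> alts n" "w \<in> alts n" "u \<noteq> w" "(u, w) \<notin> rk h" "(w, u) \<notin> rk h"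
    using assms by (auto simp: terminal_def total_on_def)
  then have "w \<in> Lset n h u \<or> u \<in> Lset n h w"
    by (cases "u < w") (auto simp: Lset_def unranked_def)
  then show ?thesis
    using \<open>u \<in> alts n\<close> \<open>w \<in> alts n\<close> by blast
qed

lemma rk_total_above:
  assumes "\<And>z. z \<in> alts n \<Longrightarrow> x < z \<Longrightarrow> Lset n h z = {}"
  shows "total_on {v \<in> alts n. x < v} (rk h)"
proof (rule total_onI)
  fix a b
  assume "a \<in> {v \<in> alts n. x < v}" "b \<in> {v \<in> alts n. x < v}" "a \<noteq> b"
  then show "(a, b) \<in> rk h \<or> (b, a) \<in> rk h"
    using assms[of a] assms[of b] by (cases "a < b") (auto simp: Lset_def unranked_def)
qed

lemma insertion_strategy_eq:
  assumes "acyclic (set h)" "\<not> terminal n h"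
  obtains x y where "insertion_strategy n h = (x, y)" "x \<in> alts n"
    "\<And>z. z \<in> alts n \<Longrightarrow> x < z \<Longrightarrow> Lset n h z = {}" "greatest_in (rk h) (Lset n h x) y"
proof -
  define Z where "Z = {z \<in> alts n. Lset n h z \<noteq> {}}"
  define x where "x = Max Z"
  have "finite Z" "Z \<noteq> {}"
    using exists_Lset_nonempty[OF assms(2)] by (auto simp: Z_def alts_def)
  then have "x \<in> Z"
    unfolding x_def by (rule Max_in)
  then have x: "x \<in> alts n" and L: "Lset n h x \<noteq> {}"
    by (simp_all add: Z_def)
  have above: "Lset n h z = {}" if "z \<in> alts n" "x < z" for z
  proof (rule ccontr)
    assume "Lset n h z \<noteq> {}"
    then have "z \<le> x"
      using that \<open>finite Z\<close> by (simp add: x_def Z_def)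
    with \<open>x < z\<close> show False
      by simp
  qed
  have "wf (rk h)"
    unfolding rk_def using assms(1) by (simp add: finite_acyclic_wf wf_trancl)
  then obtain y where y: "y \<in> Lset n h x" and top: "\<And>w. (w, y) \<in> rk h \<Longrightarrow> w \<notin> Lset n h x"
    using wfE_min' L by blast
  have "Lset n h x \<subseteq> {v \<in> alts n. x < v}"
    by (auto simp: Lset_def unranked_def)
  with rk_total_above[OF above] have total: "total_on (Lset n h x) (rk h)"
    by (rule total_on_subset)
  have "(y, w) \<in> rk h" if "w \<in> Lset n h x" "w \<noteq> y" for w
    using total that y top unfolding total_on_def by blast
  with y have greatest: "greatest_in (rk h) (Lset n h x) y"
    by (simp add: greatest_in_def)
  have "trans (rk h)" "irrefl (rk h)"
    using assms(1) by (simp_all add: rk_def acyclic_irrefl)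
  then have "(THE y. greatest_in (rk h) (Lset n h x) y) = y"
    using greatest greatest_in_unique by (intro the_equality)
  then have "insertion_strategy n h = (x, y)"
    by (simp add: insertion_strategy_def x_def Z_def greatest_in_def)
  then show ?thesis
    using x above greatest by (rule that)
qed

lemma insertion_strategy_pair:
  assumes "acyclic (set h)" "\<not> terminal n h"
  obtains x y where "insertion_strategy n h = (x, y)" "unranked n h x y" "x < y"
    "\<And>v. v \<in> alts n \<Longrightarrow> x < v \<Longrightarrow> v \<noteq> y \<Longrightarrow> (y, v) \<in> rk h \<or> (v, x) \<in> rk h"
proof -
  obtain x y where xy: "insertion_strategy n h = (x, y)" and "x \<in> alts n"
    and above: "\<And>z. z \<in> alts n \<Longrightarrow> x < z \<Longrightarrow> Lset n h z = {}"
    and greatest: "greatest_in (rk h) (Lset n h x) y"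
    using insertion_strategy_eq[OF assms] by blast
  have "unranked n h x y" "x < y"
    using greatest by (simp_all add: greatest_in_def Lset_def)
  moreover have "(y, v) \<in> rk h \<or> (v, x) \<in> rk h"
    if "v \<in> alts n" "x < v" "v \<noteq> y" for v
  proof (cases "v \<in> Lset n h x")
    case True
    then show ?thesis
      using greatest \<open>v \<noteq> y\<close> by (simp add: greatest_in_def)
  next
    case False
    then have "(x, v) \<in> rk h \<or> (v, x) \<in> rk h"
      using that \<open>x \<in> alts n\<close> by (auto simp: Lset_def unranked_def)
    moreover have "(y, v) \<in> rk h \<or> (v, y) \<in> rk h"
      using rk_total_above[OF above] that \<open>x < y\<close> \<open>unranked n h x y\<close>
      by (auto simp: total_on_def unranked_def)
    moreover have "(x, y) \<notin> rk h"
      using \<open>unranked n h x y\<close> by (simp add: unranked_def)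
    moreover have "trans (rk h)"
      by (simp add: rk_def)
    ultimately show ?thesis
      by (meson transD)
  qed
  ultimately show ?thesis
    using that xy by blast
qed

locale ranked_tournament =
  fixes n :: nat and W I :: "(nat \<times> nat) set"
  assumes tournament: "tournament n W" and insertion_ranking: "insertion_ranking W (alts n) I"
begin

lemma ranking_I: "ranking n I"
  using insertion_ranking by (rule ranking_if_insertion_ranking)

lemma
  shows field_I: "I \<subseteq> alts n \<times> alts n" and trans_I: "trans I" and irrefl_I: "(a, a) \<notin> I"
    and total_I: "a \<in> alts n \<Longrightarrow> b \<in> alts n \<Longrightarrow> a \<noteq> b \<Longrightarrow> (a, b) \<in> I \<or> (b, a) \<in> I"
  using ranking_I by (auto simp: ranking_def proto_ranking_def irrefl_def total_on_def)

lemma asym_I: "(a, b) \<in> I \<Longrightarrow> (b, a) \<notin> I"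
  using trans_I irrefl_I by (blast dest: transD)

lemma play_mem_I:
  assumes "x \<in> alts n" "y \<in> alts n" "x < y" and won: "(x, y) \<in> I \<Longrightarrow> (x, y) \<in> W"
  shows "play W (x, y) \<in> I"
proof (cases "(x, y) \<in> W")
  case True
  have "(y, x) \<notin> W"
    using True tournament by (simp add: tournament_def)
  then have "(y, x) \<notin> I"
    using insertion_ranking assms(1-3) by (auto simp: insertion_ranking_def inverted_pairs_won_def)
  then show ?thesis
    using True total_I[OF assms(1,2)] assms(3) by (auto simp: play_def)
next
  case False
  then show ?thesis
    using won total_I assms(1-3) by (auto simp: play_def)
qed

lemma duel_respects_ranking:
  assumes h: "set h \<subseteq> I" and "a \<in> alts n" "c \<in> alts n" "a < c"
    and won: "(a, c) \<in> I \<Longrightarrow> (a, c) \<in> W"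
  shows "set (fst (duel W (h, c) a)) \<subseteq> I \<and> snd (duel W (h, c) a) = (if (a, c) \<in> I then a else c)"
proof -
  have rk: "rk h \<subseteq> I"
    using rk_subset trans_I h .
  have play: "play W (a, c) \<in> I"
    using play_mem_I assms(2-4) won .
  have "fst (play W (a, c)) = (if (a, c) \<in> I then a else c)"
    using play asym_I by (auto simp: play_def)
  then show ?thesis
    using h rk play asym_I by (auto simp: duel_def Let_def)
qed

lemma amendment_respects_ranking:
  assumes "S \<noteq> []" "sorted_wrt (<) S" "set S \<subseteq> alts n" "adjacent_pairs_won W (set S) I"
    and "set h \<subseteq> I"
  shows "set (fst (amendment W h S)) \<subseteq> I \<and> greatest_in I (set S) (snd (amendment W h S))"
  using assms
proof (induction S)
  case Nil
  then show ?case
    by simp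
next
  case (Cons a S)
  show ?case
  proof (cases "S = []")
    case True
    then show ?thesis
      using Cons.prems by (simp add: amendment_def greatest_in_def)
  next
    case False
    obtain h' c where hc: "amendment W h S = (h', c)"
      by fastforce
    have a_least: "\<forall>v\<in>set S. a < v"
      using Cons.prems(2) by simp
    have "adjacent_pairs_won W (set S) I"
      by (rule adjacent_pairs_won_subset[OF Cons.prems(4)]) (use a_least in auto)
    then have h': "set h' \<subseteq> I" and c: "greatest_in I (set S) c"
      using Cons.IH False Cons.prems hc by auto
    have "c \<in> set S"
      using c by (simp add: greatest_in_def)
    then have "a < c" "a \<in> alts n" "c \<in> alts n"
      using a_least Cons.prems(3) by auto
    have won: "(a, c) \<in> W" if "(a, c) \<in> I"
    proof -
      have "(v, c) \<notin> I" if "v \<in> set (a # S)" "a < v" for v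
        using that c irrefl_I asym_I by (auto simp: greatest_in_def)
      then show ?thesis
        using Cons.prems(4) \<open>a < c\<close> \<open>c \<in> set S\<close> \<open>(a, c) \<in> I\<close>
        by (simp add: adjacent_pairs_won_def)
    qed
    have "amendment W h (a # S) = duel W (h', c) a"
      using False hc by (simp add: amendment_def)
    moreover note duel_respects_ranking[OF h' \<open>a \<in> alts n\<close> \<open>c \<in> alts n\<close> \<open>a < c\<close> won]
    moreover have "(c, a) \<in> I" if "(a, c) \<notin> I"
      using that total_I \<open>a < c\<close> \<open>a \<in> alts n\<close> \<open>c \<in> alts n\<close> by blast
    ultimately show ?thesis
      using c trans_I by (auto simp: greatest_in_def dest: transD)
  qed
qed

lemma ramend_respects_ranking:
  assumes "sorted_wrt (<) S" "set S \<subseteq> alts n" "I `` set S \<subseteq> set S" "set h \<subseteq> I"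
  shows "set (ramend k W h S) \<subseteq> I"
  using assms
proof (induction k arbitrary: S h)
  case 0
  then show ?case
    by simp
next
  case (Suc k)
  show ?case
  proof (cases "S = []")
    case True
    then show ?thesis
      using Suc.prems by simp
  next
    case False
    have "adjacent_pairs_won W (set S) I"
      by (rule adjacent_pairs_won_subset[of W "alts n"])
        (use insertion_ranking Suc.prems(2,3) in \<open>auto simp: insertion_ranking_def\<close>)
    moreover obtain h' c where hc: "amendment W h S = (h', c)"
      by fastforce
    ultimately have h': "set h' \<subseteq> I" and c: "greatest_in I (set S) c"
      using amendment_respects_ranking[OF False Suc.prems(1,2) _ Suc.prems(4)] by auto
    have distinct: "distinct S"
      using Suc.prems(1) strict_sorted_iff by blast
    have "sorted_wrt (<) (remove1 c S)"
      using Suc.prems(1) by (simp add: strict_sorted_iff sorted_remove1)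
    moreover have "set (remove1 c S) \<subseteq> alts n"
      using Suc.prems(2) distinct by auto
    moreover have "I `` set (remove1 c S) \<subseteq> set (remove1 c S)"
      using Suc.prems(3) c distinct by (auto simp: greatest_in_def dest: asym_I)
    ultimately have "set (ramend k W h' (remove1 c S)) \<subseteq> I"
      using Suc.IH h' by blast
    then show ?thesis
      using False hc by simp
  qed
qed

lemma amend_votes_respect_ranking: "set (amend_votes n W) \<subseteq> I"
  unfolding amend_votes_def
proof (rule ramend_respects_ranking)
  show "set [1..<Suc n] \<subseteq> alts n" "I `` set [1..<Suc n] \<subseteq> set [1..<Suc n]"
    using field_I by (auto simp: alts_def)
qed (simp_all del: upt_Suc)

lemma outcome_amendment_strategy:
  assumes "amendment_strategy n \<sigma>"
  shows "outcome n \<sigma> W = I"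
proof -
  let ?votes = "amend_votes n W"
  have votes: "k < length ?votes \<and> ?votes ! k = play W (\<sigma> (hist n \<sigma> W k))"
    if "\<not> terminal n (hist n \<sigma> W k)" for k
    using assms tournament that unfolding amendment_strategy_def by blast
  have terminates: "\<exists>k. terminal n (hist n \<sigma> W k)"
    using votes[of "length ?votes"] by blast
  have "set (hist n \<sigma> W k) \<subseteq> set ?votes" for k
  proof (induction k)
    case (Suc k)
    show ?case
    proof (cases "terminal n (hist n \<sigma> W k)")
      case False
      then have "play W (\<sigma> (hist n \<sigma> W k)) \<in> set ?votes"
        using votes nth_mem by metis
      then show ?thesis
        using Suc False by simp
    qed (use Suc in simp)
  qed simp
  then have "set (hist n \<sigma> W k) \<subseteq> I" for k
    using amend_votes_respect_ranking by blast
  then show ?thesis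
    by (rule outcome_eq_ranking[OF ranking_I terminates])
qed

lemma insertion_strategy_step:
  assumes h: "set h \<subseteq> I" and "\<not> terminal n h"
  shows "unranked n h (fst (insertion_strategy n h)) (snd (insertion_strategy n h))
    \<and> play W (insertion_strategy n h) \<in> I"
proof -
  have rk: "rk h \<subseteq> I"
    using rk_subset trans_I h .
  have "acyclic I"
    using trans_I irrefl_I by (simp add: acyclic_irrefl irrefl_def)
  then obtain x y where xy: "insertion_strategy n h = (x, y)" "unranked n h x y" "x < y"
    and split: "\<And>v. v \<in> alts n \<Longrightarrow> x < v \<Longrightarrow> v \<noteq> y \<Longrightarrow>
      (y, v) \<in> rk h \<or> (v, x) \<in> rk h"
    using insertion_strategy_pair acyclic_subset h assms(2) by metis
  have "x \<in> alts n" "y \<in> alts n"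
    using xy(2) by (simp_all add: unranked_def)
  moreover have "(x, y) \<in> W" if "(x, y) \<in> I"
  proof -
    have "(v, y) \<notin> I" if "v \<in> alts n" "x < v" "(x, v) \<in> I" for v
      using split[OF that(1,2)] that(3) rk irrefl_I by (auto dest: asym_I)
    then show ?thesis
      using insertion_ranking \<open>(x, y) \<in> I\<close> \<open>x \<in> alts n\<close> \<open>y \<in> alts n\<close> \<open>x < y\<close>
      by (simp add: insertion_ranking_def adjacent_pairs_won_def)
  qed
  ultimately have "play W (x, y) \<in> I"
    using play_mem_I \<open>x < y\<close> by blast
  then show ?thesis
    using xy by simp
qed

lemma outcome_insertion_strategy: "outcome n (insertion_strategy n) W = I"
proof -
  let ?hist = "hist n (insertion_strategy n) W"
  have votes: "set (?hist k) \<subseteq> I" for k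
  proof (induction k)
    case (Suc k)
    then show ?case
      using insertion_strategy_step[OF Suc] by simp
  qed simp
  have "\<exists>k. terminal n (?hist k)"
  proof (rule hist_terminates)
    show "finite I"
      using field_I finite_subset by (auto simp: alts_def)
    show "unranked n (?hist k) (fst (insertion_strategy n (?hist k))) (snd (insertion_strategy n (?hist k)))"
      if "\<not> terminal n (?hist k)" for k
      using insertion_strategy_step[OF votes that] by blast
  qed (fact votes)
  then show ?thesis
    using outcome_eq_ranking[OF ranking_I] votes by blast
qed

end

theorem proposition3:
  assumes "is_strategy n \<sigma>"
    and "amendment_strategy n \<sigma>"
  shows "outcome_equiv n \<sigma> (insertion_strategy n)"
  unfolding outcome_equiv_def
proof (intro allI impI)
  fix W
  assume W: "tournament n W"
  then obtain I where "insertion_ranking W (alts n) I"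
    using insertion_ranking_exists by (force simp: tournament_def alts_def)
  with W interpret ranked_tournament n W I
    by unfold_locales
  show "outcome n \<sigma> W = outcome n (insertion_strategy n) W"
    using outcome_amendment_strategy[OF assms(2)] outcome_insertion_strategy by simp
qed

end
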